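(* Let $1<p<\infty$, let $E$ be a separable Banach space, and let $\mu_1,\mu_2$ be two $\sigma$-additive $\sigma$-finite separable measures on the same measurable space $\Omega$ that are mutually absolutely continuous. Let $G$ be a countable amenable group and $\{\alpha_g\}_{g\in G}$ a group of invertible measurable maps of $\Omega$ preserving the (common) class of null sets, acting metrically freely. For $i=1,2$ let $D_i=L^p_{\mu_i}(\Omega,E)$, let $A_i=L^\infty_{\mu_1}(\Omega,L(E))\ (=L^\infty_{\mu_2}(\Omega,L(E)))$ act on $D_i$ by multiplication, let $T^i_g$ be the isometries $(T^i_gf)(x)=\rho^i_g(x)^{1/p}f(\alpha_g^{-1}(x))$ of $D_i$, and let $B(A_i,T^i_g)$ be the closed subalgebra of $L(D_i)$ generated by $A_i$ and $\{T^i_g\}$. Then $B(A_1,T^1_g)$ and $B(A_2,T^2_g)$ are isomorphic as Banach algebras, via the isomorphism determined by the natural identification $A_1\cong A_2$ and $T^1_g\mapsto T^2_g$; i.e. for every finite $F$ and $a_g\in A_1$, $\|\sum_{g\in F}a_gT^1_g\|_{L(D_1)}=\|\sum_{g\in F}a_gT^2_g\|_{L(D_2)}$.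
   Context: $\rho^i_g$ is the Radon–Nikodym derivative of $\Delta\mapsto\mu_i(\alpha_g^{-1}(\Delta))$ with respect to $\mu_i$; $\alpha_{gh}=\alpha_g\circ\alpha_h$, $\alpha_e=\mathrm{id}$. $G$ acts metrically freely if for every finite $\{g_1,\dots,g_k\}\subset G$ and measurable $\Delta$ with $\mu_1(\Delta)>0$ there is measurable $\Delta'\subset\Delta$, $\mu_1(\Delta')>0$, with $\mu_1(\alpha_{g_i}(\Delta')\cap\alpha_{g_j}(\Delta'))=0$ for $i\neq j$ (equivalently for $\mu_2$, since the null sets coincide). *)

theory Defs
  imports "HOL-Analysis.Analysis" "HOL-Algebra.Group"
begin

definition separable_measure :: "'a measure \<Rightarrow> bool" where
  "separable_measure M \<longleftrightarrow>
     (\<exists>C. countable C \<and> C \<subseteq> sets M \<and>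
        (\<forall>A\<in>sets M. emeasure M A < \<infinity> \<longrightarrow>
           (\<forall>e>0. \<exists>B\<in>C. emeasure M ((A - B) \<union> (B - A)) < ennreal e)))"

definition amenable_group :: "('g, 'b) monoid_scheme \<Rightarrow> bool" where
  "amenable_group G \<longleftrightarrow>
     (\<exists>m :: 'g set \<Rightarrow> real.
        m (carrier G) = 1 \<and>
        (\<forall>A. A \<subseteq> carrier G \<longrightarrow> 0 \<le> m A) \<and>
        (\<forall>A B. A \<subseteq> carrier G \<longrightarrow> B \<subseteq> carrier G \<longrightarrow> A \<inter> B = {} \<longrightarrow>
                 m (A \<union> B) = m A + m B) \<and>
        (\<forall>g\<in>carrier G. \<forall>A. A \<subseteq> carrier G \<longrightarrow> m ((\<lambda>h. g \<otimes>\<^bsub>G\<^esub> h) ` A) = m A))"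

definition null_preserving_action ::
  "('g, 'b) monoid_scheme \<Rightarrow> 'a measure \<Rightarrow> ('g \<Rightarrow> 'a \<Rightarrow> 'a) \<Rightarrow> bool" where
  "null_preserving_action G M \<alpha> \<longleftrightarrow>
     (\<forall>g\<in>carrier G. \<alpha> g \<in> M \<rightarrow>\<^sub>M M \<and> bij_betw (\<alpha> g) (space M) (space M)) \<and>
     (\<forall>x\<in>space M. \<alpha> \<one>\<^bsub>G\<^esub> x = x) \<and>
     (\<forall>g\<in>carrier G. \<forall>h\<in>carrier G. \<forall>x\<in>space M. \<alpha> (g \<otimes>\<^bsub>G\<^esub> h) x = \<alpha> g (\<alpha> h x)) \<and>
     (\<forall>g\<in>carrier G. \<forall>A\<in>sets M. (\<alpha> g -` A \<inter> space M \<in> null_sets M \<longleftrightarrow> A \<in> null_sets M))"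

definition metrically_free ::
  "('g, 'b) monoid_scheme \<Rightarrow> 'a measure \<Rightarrow> ('g \<Rightarrow> 'a \<Rightarrow> 'a) \<Rightarrow> bool" where
  "metrically_free G M \<alpha> \<longleftrightarrow>
     (\<forall>K. finite K \<longrightarrow> K \<subseteq> carrier G \<longrightarrow>
        (\<forall>D\<in>sets M. 0 < emeasure M D \<longrightarrow>
           (\<exists>D'\<in>sets M. D' \<subseteq> D \<and> 0 < emeasure M D' \<and>
              (\<forall>g\<in>K. \<forall>h\<in>K. g \<noteq> h \<longrightarrow> \<alpha> g ` D' \<inter> \<alpha> h ` D' \<in> null_sets M))))"

definition Linf_op :: "'a measure \<Rightarrow> ('a \<Rightarrow> ('e::real_normed_vector \<Rightarrow>\<^sub>L 'e)) \<Rightarrow> bool" where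
  "Linf_op M a \<longleftrightarrow>
     (\<forall>v. (\<lambda>x. blinfun_apply (a x) v) \<in> borel_measurable M) \<and>
     (\<exists>C. AE x in M. norm (a x) \<le> C)"

definition rho :: "'a measure \<Rightarrow> ('g \<Rightarrow> 'a \<Rightarrow> 'a) \<Rightarrow> 'g \<Rightarrow> 'a \<Rightarrow> real" where
  "rho M \<alpha> g = (\<lambda>x. enn2real (RN_deriv M (distr M M (\<alpha> g)) x))"

text \<open>The operator sum_{g in F} a_g T_g on L^p_M(Omega,E), acting on representatives:
  (T_g f)(x) = rho_g(x)^{1/p} f(alpha_g^{-1} x).\<close>
definition cov_sum ::
  "('g, 'b) monoid_scheme \<Rightarrow> 'a measure \<Rightarrow> ('g \<Rightarrow> 'a \<Rightarrow> 'a) \<Rightarrow> real \<Rightarrow> 'g set \<Rightarrow>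
   ('g \<Rightarrow> 'a \<Rightarrow> ('e::real_normed_vector \<Rightarrow>\<^sub>L 'e)) \<Rightarrow> ('a \<Rightarrow> 'e) \<Rightarrow> 'a \<Rightarrow> 'e" where
  "cov_sum G M \<alpha> p F a f = (\<lambda>x. \<Sum>g\<in>F. blinfun_apply (a g x)
       ((rho M \<alpha> g x powr (1 / p)) *\<^sub>R f (\<alpha> (inv\<^bsub>G\<^esub> g) x)))"

definition Lp_pow :: "'a measure \<Rightarrow> real \<Rightarrow> ('a \<Rightarrow> 'e::real_normed_vector) \<Rightarrow> ennreal" where
  "Lp_pow M p f = (\<integral>\<^sup>+ x. ennreal (norm (f x) powr p) \<partial>M)"

definition Lp_opnorm_pow ::
  "'a measure \<Rightarrow> real \<Rightarrow> (('a \<Rightarrow> 'e::real_normed_vector) \<Rightarrow> 'a \<Rightarrow> 'e) \<Rightarrow> ennreal" where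
  "Lp_opnorm_pow M p S =
     (SUP f\<in>{f. f \<in> borel_measurable M \<and> Lp_pow M p f \<le> 1}. Lp_pow M p (S f))"

end

theory Submission
  imports Defs
begin

text \<open>Multiplication by \<open>h\<^bsup>1/p\<^esup>\<close>, where \<open>h = d\<mu>\<^sub>1/d\<mu>\<^sub>2\<close>, maps \<open>L\<^sup>p\<^sub>\<mu>\<^sub>1(\<Omega>,E)\<close> isometrically
  into \<open>L\<^sup>p\<^sub>\<mu>\<^sub>2(\<Omega>,E)\<close>. It commutes with the multiplication operators, and by the chain rule
  for Radon--Nikodym derivatives it intertwines \<open>T\<^sup>1\<^sub>g\<close> with \<open>T\<^sup>2\<^sub>g\<close>. Hence every covariance
  sum \<open>\<Sum> a\<^sub>g T\<^sup>1\<^sub>g\<close> has norm at most that of \<open>\<Sum> a\<^sub>g T\<^sup>2\<^sub>g\<close>, and by symmetry the norms agree.\<close>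

lemma borel_measurable_blinfun_apply_strong:
  fixes A :: "'a \<Rightarrow> ('b::{real_normed_vector, second_countable_topology} \<Rightarrow>\<^sub>L 'c::{real_normed_vector, second_countable_topology})"
  assumes A: "\<And>v. (\<lambda>x. blinfun_apply (A x) v) \<in> borel_measurable M"
    and w: "w \<in> borel_measurable M"
  shows "(\<lambda>x. blinfun_apply (A x) (w x)) \<in> borel_measurable M"
proof -
  obtain W where W: "\<And>i. simple_function M (W i)"
    and W_lim: "\<And>x. x \<in> space M \<Longrightarrow> (\<lambda>i. W i x) \<longlonglongrightarrow> w x"
    using borel_measurable_implies_sequence_metric[OF w, of 0] by blast
  have W_apply: "(\<lambda>x. blinfun_apply (A x) (W i x)) \<in> borel_measurable M" for i
  proof -
    let ?V = "W i ` space M"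
    have "finite ?V" using W simple_functionD(1) by blast
    have "blinfun_apply (A x) (W i x) =
        (\<Sum>v\<in>?V. indicator (W i -` {v} \<inter> space M) x *\<^sub>R blinfun_apply (A x) v)"
      if x: "x \<in> space M" for x
    proof -
      have "(\<Sum>v\<in>?V. indicator (W i -` {v} \<inter> space M) x *\<^sub>R blinfun_apply (A x) v)
          = (\<Sum>v\<in>?V. if v = W i x then blinfun_apply (A x) v else 0)"
        by (rule sum.cong) (auto simp: indicator_def x)
      then show ?thesis using \<open>finite ?V\<close> x by (simp add: sum.delta')
    qed
    moreover have "(\<lambda>x. \<Sum>v\<in>?V. indicator (W i -` {v} \<inter> space M) x *\<^sub>R blinfun_apply (A x) v)
        \<in> borel_measurable M"
      by (intro borel_measurable_sum borel_measurable_scaleR A borel_measurable_indicator)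
        (use W simple_functionD(2) in blast)
    ultimately show ?thesis by (simp cong: measurable_cong)
  qed
  show ?thesis
  proof (rule borel_measurable_LIMSEQ_metric[OF W_apply])
    fix x assume "x \<in> space M"
    then show "(\<lambda>i. blinfun_apply (A x) (W i x)) \<longlonglongrightarrow> blinfun_apply (A x) (w x)"
      by (intro blinfun.tendsto tendsto_const W_lim)
  qed
qed

lemma null_preserving_action_measurable:
  "null_preserving_action G M \<alpha> \<Longrightarrow> g \<in> carrier G \<Longrightarrow> \<alpha> g \<in> M \<rightarrow>\<^sub>M M"
  unfolding null_preserving_action_def by blast

lemma null_preserving_action_inv_cancel:
  assumes act: "null_preserving_action G M \<alpha>" and "group G" "g \<in> carrier G" "x \<in> space M"
  shows "\<alpha> (inv\<^bsub>G\<^esub> g) (\<alpha> g x) = x"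
proof -
  have "inv\<^bsub>G\<^esub> g \<in> carrier G" using assms(2,3) by (rule group.inv_closed)
  then have "\<alpha> (inv\<^bsub>G\<^esub> g) (\<alpha> g x) = \<alpha> (inv\<^bsub>G\<^esub> g \<otimes>\<^bsub>G\<^esub> g) x"
    using act assms(3,4) unfolding null_preserving_action_def by simp
  also have "inv\<^bsub>G\<^esub> g \<otimes>\<^bsub>G\<^esub> g = \<one>\<^bsub>G\<^esub>" using assms(2,3) by (rule group.l_inv)
  also have "\<alpha> \<one>\<^bsub>G\<^esub> x = x" using act assms(4) unfolding null_preserving_action_def by simp
  finally show ?thesis .
qed

lemma null_preserving_action_absolutely_continuous_distr:
  assumes act: "null_preserving_action G M \<alpha>" and g: "g \<in> carrier G"
  shows "absolutely_continuous M (distr M M (\<alpha> g))"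
  unfolding absolutely_continuous_def
proof
  fix A assume A: "A \<in> null_sets M"
  then have "A \<in> sets M" by auto
  have "emeasure (distr M M (\<alpha> g)) A = emeasure M (\<alpha> g -` A \<inter> space M)"
    using \<open>A \<in> sets M\<close> null_preserving_action_measurable[OF act g] by (rule emeasure_distr[rotated])
  also have "\<dots> = 0"
    using act g A \<open>A \<in> sets M\<close> unfolding null_preserving_action_def by blast
  finally show "A \<in> null_sets (distr M M (\<alpha> g))" using \<open>A \<in> sets M\<close> by (intro null_setsI) auto
qed

lemma null_preserving_action_cong_null_sets:
  assumes "null_preserving_action G M \<alpha>" "sets M = sets N" "null_sets M = null_sets N"
  shows "null_preserving_action G N \<alpha>"
proof -
  have "space N = space M" using assms(2) by (intro sets_eq_imp_space_eq) simp
  moreover have "N \<rightarrow>\<^sub>M N = M \<rightarrow>\<^sub>M M" using assms(2) by (intro measurable_cong_sets) simp_all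
  ultimately show ?thesis
    using assms(1) unfolding null_preserving_action_def assms(2,3)[symmetric] by simp
qed

text \<open>Chain rule: both sides are densities of \<open>distr M M T\<close> with respect to \<open>N\<close>.\<close>

lemma RN_deriv_distr_change_reference:
  assumes sets_eq: "sets M = sets N"
    and sfM: "sigma_finite_measure M" and sfN: "sigma_finite_measure N"
    and ac: "absolutely_continuous N M"
    and T: "T \<in> M \<rightarrow>\<^sub>M M" and S: "S \<in> M \<rightarrow>\<^sub>M M"
    and inv: "\<And>x. x \<in> space M \<Longrightarrow> S (T x) = x"
    and acM: "absolutely_continuous M (distr M M T)"
    and acN: "absolutely_continuous N (distr N N T)"
  shows "AE x in N. RN_deriv N M x * RN_deriv M (distr M M T) x
           = RN_deriv N (distr N N T) x * RN_deriv N M (S x)"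
proof -
  interpret M: sigma_finite_measure M by fact
  interpret N: sigma_finite_measure N by fact
  let ?h = "RN_deriv N M"
  have space_eq: "space M = space N" using sets_eq by (rule sets_eq_imp_space_eq)
  have TN: "T \<in> N \<rightarrow>\<^sub>M N" and SN: "S \<in> N \<rightarrow>\<^sub>M N"
    using T S sets_eq by (auto cong: measurable_cong_sets)
  have h: "density N ?h = M" using N.density_RN_deriv[OF ac] sets_eq by simp
  have RM: "RN_deriv M (distr M M T) \<in> borel_measurable N"
    using sets_eq by (auto cong: measurable_cong_sets)
  have hS: "(\<lambda>x. ?h (S x)) \<in> borel_measurable N" using SN by measurable
  have "density N (\<lambda>x. ?h x * RN_deriv M (distr M M T) x)
      = density (density N ?h) (RN_deriv M (distr M M T))"
    using density_density_eq[OF _ RM] by simp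
  also have "\<dots> = distr M M T" using M.density_RN_deriv[OF acM] h by simp
  finally have lhs: "density N (\<lambda>x. ?h x * RN_deriv M (distr M M T) x) = distr M M T" .
  have "density N (\<lambda>x. RN_deriv N (distr N N T) x * ?h (S x))
      = density (density N (RN_deriv N (distr N N T))) (\<lambda>x. ?h (S x))"
    using density_density_eq[OF _ hS] by simp
  also have "\<dots> = density (distr N N T) (\<lambda>x. ?h (S x))"
    using N.density_RN_deriv[OF acN] by simp
  also have "\<dots> = distr (density N (\<lambda>x. ?h (S (T x)))) N T"
    by (rule density_distr[OF hS TN])
  also have "density N (\<lambda>x. ?h (S (T x))) = density N ?h"
    by (rule density_cong) (use TN SN inv space_eq in auto)
  also note h
  also have "distr M N T = distr M M T" using sets_eq by (intro distr_cong) auto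
  finally have rhs: "density N (\<lambda>x. RN_deriv N (distr N N T) x * ?h (S x)) = distr M M T" .
  show ?thesis
    by (rule N.density_unique) (use lhs rhs RM hS in auto)
qed

definition Lp_transfer :: "'a measure \<Rightarrow> 'a measure \<Rightarrow> real \<Rightarrow> ('a \<Rightarrow> 'e::real_normed_vector) \<Rightarrow> 'a \<Rightarrow> 'e"
  where "Lp_transfer M N p u = (\<lambda>x. (enn2real (RN_deriv N M x) powr (1/p)) *\<^sub>R u x)"

lemma borel_measurable_Lp_transfer:
  fixes u :: "'a \<Rightarrow> 'e::{real_normed_vector, second_countable_topology}"
  assumes "sets M = sets N" "u \<in> borel_measurable M"
  shows "Lp_transfer M N p u \<in> borel_measurable N"
proof -
  have "u \<in> borel_measurable N" using assms by (simp cong: measurable_cong_sets)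
  moreover have "(\<lambda>x. enn2real (RN_deriv N M x)) \<in> borel_measurable N" by simp
  ultimately show ?thesis unfolding Lp_transfer_def by measurable
qed

lemma Lp_pow_Lp_transfer:
  assumes sets_eq: "sets M = sets N"
    and sfM: "sigma_finite_measure M" and sfN: "sigma_finite_measure N"
    and ac: "absolutely_continuous N M" and p: "0 < p"
    and u: "u \<in> borel_measurable M"
  shows "Lp_pow N p (Lp_transfer M N p u) = Lp_pow M p u"
proof -
  interpret N: sigma_finite_measure N by fact
  let ?h = "RN_deriv N M"
  have "norm (Lp_transfer M N p u x) powr p = enn2real (?h x) * norm (u x) powr p" for x
    using p by (simp add: Lp_transfer_def powr_mult powr_powr)
  moreover have "AE x in N. ?h x \<noteq> \<infinity>"
    using N.RN_deriv_finite[OF sfM ac] sets_eq by simp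
  ultimately have "Lp_pow N p (Lp_transfer M N p u) = (\<integral>\<^sup>+ x. ?h x * ennreal (norm (u x) powr p) \<partial>N)"
    unfolding Lp_pow_def
    by (intro nn_integral_cong_AE) (auto simp: ennreal_mult less_top)
  also have "\<dots> = Lp_pow M p u"
    unfolding Lp_pow_def using u sets_eq
    by (intro N.RN_deriv_nn_integral[symmetric] ac) (auto cong: measurable_cong_sets)
  finally show ?thesis .
qed

lemma borel_measurable_cov_sum:
  fixes a :: "'g \<Rightarrow> 'a \<Rightarrow> ('e::{real_normed_vector, second_countable_topology} \<Rightarrow>\<^sub>L 'e)"
  assumes act: "null_preserving_action G M \<alpha>" and grp: "group G" and F: "F \<subseteq> carrier G"
    and a: "\<And>g v. g \<in> F \<Longrightarrow> (\<lambda>x. blinfun_apply (a g x) v) \<in> borel_measurable M"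
    and f: "f \<in> borel_measurable M"
  shows "cov_sum G M \<alpha> p F a f \<in> borel_measurable M"
  unfolding cov_sum_def
proof (rule borel_measurable_sum, rule borel_measurable_blinfun_apply_strong)
  fix g v assume "g \<in> F"
  then show "(\<lambda>x. blinfun_apply (a g x) v) \<in> borel_measurable M" by (rule a)
  from \<open>g \<in> F\<close> have "\<alpha> (inv\<^bsub>G\<^esub> g) \<in> M \<rightarrow>\<^sub>M M"
    using F grp by (intro null_preserving_action_measurable[OF act] group.inv_closed) auto
  then show "(\<lambda>x. rho M \<alpha> g x powr (1 / p) *\<^sub>R f (\<alpha> (inv\<^bsub>G\<^esub> g) x)) \<in> borel_measurable M"
    unfolding rho_def using f by measurable
qed

lemma cov_sum_Lp_transfer:
  fixes a :: "'g \<Rightarrow> 'a \<Rightarrow> ('e::real_normed_vector \<Rightarrow>\<^sub>L 'e)"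
  assumes sets_eq: "sets M = sets N"
    and sfM: "sigma_finite_measure M" and sfN: "sigma_finite_measure N"
    and ac: "absolutely_continuous N M"
    and actM: "null_preserving_action G M \<alpha>" and actN: "null_preserving_action G N \<alpha>"
    and grp: "group G" and F: "finite F" "F \<subseteq> carrier G"
  shows "AE x in N. cov_sum G N \<alpha> p F a (Lp_transfer M N p f) x
                     = Lp_transfer M N p (cov_sum G M \<alpha> p F a f) x"
proof -
  let ?h = "\<lambda>x. enn2real (RN_deriv N M x)"
  have "AE x in N. \<forall>g\<in>F. RN_deriv N M x * RN_deriv M (distr M M (\<alpha> g)) x
          = RN_deriv N (distr N N (\<alpha> g)) x * RN_deriv N M (\<alpha> (inv\<^bsub>G\<^esub> g) x)"
  proof (intro AE_ball_countable' countable_finite F)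
    fix g assume "g \<in> F"
    then have g: "g \<in> carrier G" "inv\<^bsub>G\<^esub> g \<in> carrier G" using F grp by auto
    show "AE x in N. RN_deriv N M x * RN_deriv M (distr M M (\<alpha> g)) x
          = RN_deriv N (distr N N (\<alpha> g)) x * RN_deriv N M (\<alpha> (inv\<^bsub>G\<^esub> g) x)"
      using g by (intro RN_deriv_distr_change_reference sets_eq sfM sfN ac
          null_preserving_action_measurable[OF actM] null_preserving_action_inv_cancel[OF actM grp]
          null_preserving_action_absolutely_continuous_distr[OF actM]
          null_preserving_action_absolutely_continuous_distr[OF actN])
  qed
  then show ?thesis
  proof eventually_elim
    case (elim x)
    let ?S = "\<lambda>g. \<alpha> (inv\<^bsub>G\<^esub> g) x"
    have "cov_sum G N \<alpha> p F a (Lp_transfer M N p f) x = (\<Sum>g\<in>F. blinfun_apply (a g x)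
        ((rho N \<alpha> g x powr (1/p) * ?h (?S g) powr (1/p)) *\<^sub>R f (?S g)))"
      unfolding cov_sum_def Lp_transfer_def by simp
    also have "\<dots> = (\<Sum>g\<in>F. blinfun_apply (a g x)
        ((?h x powr (1/p) * rho M \<alpha> g x powr (1/p)) *\<^sub>R f (?S g)))"
    proof (rule sum.cong[OF refl])
      fix g assume "g \<in> F"
      from arg_cong[OF bspec[OF elim this], of enn2real]
      have "rho N \<alpha> g x powr (1/p) * ?h (?S g) powr (1/p) = ?h x powr (1/p) * rho M \<alpha> g x powr (1/p)"
        by (simp add: rho_def enn2real_mult flip: powr_mult)
      then show "blinfun_apply (a g x) ((rho N \<alpha> g x powr (1/p) * ?h (?S g) powr (1/p)) *\<^sub>R f (?S g))
          = blinfun_apply (a g x) ((?h x powr (1/p) * rho M \<alpha> g x powr (1/p)) *\<^sub>R f (?S g))"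
        by simp
    qed
    also have "\<dots> = Lp_transfer M N p (cov_sum G M \<alpha> p F a f) x"
      unfolding cov_sum_def Lp_transfer_def by (simp add: scaleR_sum_right blinfun.scaleR_right)
    finally show ?case .
  qed
qed

lemma Lp_opnorm_pow_cov_sum_le:
  fixes a :: "'g \<Rightarrow> 'a \<Rightarrow> ('e::{real_normed_vector, second_countable_topology} \<Rightarrow>\<^sub>L 'e)"
  assumes sets_eq: "sets M = sets N"
    and sfM: "sigma_finite_measure M" and sfN: "sigma_finite_measure N"
    and ac: "absolutely_continuous N M" and p: "0 < p"
    and actM: "null_preserving_action G M \<alpha>" and actN: "null_preserving_action G N \<alpha>"
    and grp: "group G" and F: "finite F" "F \<subseteq> carrier G"
    and a: "\<And>g v. g \<in> F \<Longrightarrow> (\<lambda>x. blinfun_apply (a g x) v) \<in> borel_measurable M"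
  shows "Lp_opnorm_pow M p (cov_sum G M \<alpha> p F a) \<le> Lp_opnorm_pow N p (cov_sum G N \<alpha> p F a)"
  unfolding Lp_opnorm_pow_def
proof (rule SUP_least)
  fix f :: "'a \<Rightarrow> 'e" assume "f \<in> {f. f \<in> borel_measurable M \<and> Lp_pow M p f \<le> 1}"
  then have f: "f \<in> borel_measurable M" and f_le: "Lp_pow M p f \<le> 1" by auto
  let ?U = "Lp_transfer M N p"
  have "Lp_pow M p (cov_sum G M \<alpha> p F a f) = Lp_pow N p (?U (cov_sum G M \<alpha> p F a f))"
    using borel_measurable_cov_sum[OF actM grp F(2) a f]
    by (intro Lp_pow_Lp_transfer[symmetric] sets_eq sfM sfN ac p)
  also have "\<dots> = Lp_pow N p (cov_sum G N \<alpha> p F a (?U f))"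
    unfolding Lp_pow_def
    by (rule nn_integral_cong_AE)
      (use cov_sum_Lp_transfer[OF sets_eq sfM sfN ac actM actN grp F, of p a f] in auto)
  also have "\<dots> \<le> (SUP f\<in>{f. f \<in> borel_measurable N \<and> Lp_pow N p f \<le> 1}.
                      Lp_pow N p (cov_sum G N \<alpha> p F a f))"
    using f f_le borel_measurable_Lp_transfer[OF sets_eq f]
      Lp_pow_Lp_transfer[OF sets_eq sfM sfN ac p f]
    by (intro SUP_upper) auto
  finally show "Lp_pow M p (cov_sum G M \<alpha> p F a f) \<le> \<dots>" .
qed

theorem mainTheorem11:
  fixes p :: real
    and M1 M2 :: "'a measure"
    and G :: "('g, 'b) monoid_scheme"
    and \<alpha> :: "'g \<Rightarrow> 'a \<Rightarrow> 'a"
    and F :: "'g set"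
    and a :: "'g \<Rightarrow> 'a \<Rightarrow> ('e::{banach, second_countable_topology} \<Rightarrow>\<^sub>L 'e)"
  assumes p: "1 < p"
    and sets_eq: "sets M1 = sets M2"
    and sf1: "sigma_finite_measure M1" and sf2: "sigma_finite_measure M2"
    and sep1: "separable_measure M1" and sep2: "separable_measure M2"
    and ac12: "absolutely_continuous M1 M2" and ac21: "absolutely_continuous M2 M1"
    and grp: "group G" and cnt: "countable (carrier G)" and amen: "amenable_group G"
    and act: "null_preserving_action G M1 \<alpha>"
    and free: "metrically_free G M1 \<alpha>"
    and F: "finite F" "F \<subseteq> carrier G"
    and a: "\<forall>g\<in>F. Linf_op M1 (a g)"
  shows "Lp_opnorm_pow M1 p (cov_sum G M1 \<alpha> p F a) = Lp_opnorm_pow M2 p (cov_sum G M2 \<alpha> p F a)"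
proof -
  have act2: "null_preserving_action G M2 \<alpha>"
    using ac12 ac21 unfolding absolutely_continuous_def
    by (intro null_preserving_action_cong_null_sets[OF act sets_eq]) auto
  have a1: "(\<lambda>x. blinfun_apply (a g x) v) \<in> borel_measurable M1" if "g \<in> F" for g v
    using a that unfolding Linf_op_def by blast
  then have a2: "(\<lambda>x. blinfun_apply (a g x) v) \<in> borel_measurable M2" if "g \<in> F" for g v
    using that sets_eq by (simp cong: measurable_cong_sets)
  have "0 < p" using p by simp
  show ?thesis
    using Lp_opnorm_pow_cov_sum_le[OF sets_eq sf1 sf2 ac21 \<open>0 < p\<close> act act2 grp F a1]
      Lp_opnorm_pow_cov_sum_le[OF sets_eq[symmetric] sf2 sf1 ac12 \<open>0 < p\<close> act2 act grp F a2]
    by (rule antisym)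
qed

end
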